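(* Let $\mathcal G$ be a shortest-path game in which $\mathrm{Val}^{\mathrm d}(v)\neq+\infty$ and $\overline{\mathrm{Val}}^{\mathrm m}(v)\neq+\infty$ for all vertices $v$. Let $\sigma_1$ be a fake-optimal NC-strategy of Min, $\sigma_2$ an attractor strategy of Min, $p\in(0,1)$, $\rho_p$ the memoryless strategy defined below, and $\tau$ a deterministic memoryless strategy of Max. Then every cycle of the Markov chain $\mathcal G^{\rho_p,\tau}$ (a cycle using only transitions of positive probability) with non-negative total weight contains at least one transition of probability $1-p$, i.e. a transition from a Min vertex $v$ to $\sigma_2(v)$ where $v$ lies in a strongly connected component of $(V,E)$ containing a negative-weight cycle and $\sigma_1(v)\neq\sigma_2(v)$.
   Context: A shortest-path game is $\mathcal G=(V_{\mathrm{Max}},V_{\mathrm{Min}},T,E,w)$ with finite $V=V_{\mathrm{Max}}\uplus V_{\mathrm{Min}}\uplus T$, edges $E\subseteq (V\setminus T)\times V$ with every non-target vertex having a successor, and integer weights $w\colon E\to\mathbb Z$. Plays from $v$ are finite paths ending at their first visit to $T$ (total payoff $\mathrm{TP}$ = sum of weights) or infinite paths avoiding $T$ ($\mathrm{TP}=+\infty$). Strategies of Min (resp. Max) map finite paths ending in $V_{\mathrm{Min}}$ (resp. $V_{\mathrm{Max}}$) to distributions on successors of the last vertex; deterministic = always Dirac, memoryless = depends only on the last vertex. For deterministic $\sigma,\tau$, $\mathrm{Val}^\sigma(v)=\sup_\tau\mathrm{TP}$ of the unique conforming play, $\mathrm{Val}^{\mathrm d}(v)=\inf_\sigma\mathrm{Val}^\sigma(v)$.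 For memoryless $\rho,\tau$, $\mathcal G^{\rho,\tau}$ denotes the induced Markov chain on $V$ (Min vertices move by $\rho$, Max vertices by $\tau$), with weights inherited from $\mathcal G$; $\overline{\mathrm{Val}}^{\mathrm m}(v)=\inf_\rho\sup_\tau\mathbb E^{\rho,\tau}_v(\mathrm{TP})$. A path conforms to a memoryless deterministic Min strategy $\sigma_1$ if each Min vertex $u$ on it (except possibly the last) is followed by $\sigma_1(u)$. An NC-strategy is a memoryless deterministic Min strategy all of whose conforming cycles have negative total weight; it is fake-optimal if for all $v$, every finite play from $v$ ending in $T$ conforming to it has total payoff at most $\mathrm{Val}^{\mathrm d}(v)$. An attractor strategy is a memoryless deterministic Min strategy guaranteeing that every conforming play reaches $T$. The strategy $\rho_p$: for $v\in V_{\mathrm{Min}}$, if the strongly connected component of $v$ in $(V,E)$ contains no negative-weight cycle, $\rho_p(v)$ is the Dirac distribution on $\sigma_1(v)$; otherwise, if $\sigma_1(v)\ne\sigma_2(v)$, $\rho_p(v)$ chooses $\sigma_1(v)$ with probability $p$ and $\sigma_2(v)$ with probability $1-p$, and if $\sigma_1(v)=\sigma_2(v)$ it chooses it with probability 1. *)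

theory Defs
  imports "HOL-Probability.Probability"
begin

definition spgame :: "'v set \<Rightarrow> 'v set \<Rightarrow> 'v set \<Rightarrow> ('v \<times> 'v) set \<Rightarrow> bool" where
  "spgame VMax VMin T E \<longleftrightarrow>
     finite VMax \<and> finite VMin \<and> finite T \<and>
     VMax \<inter> VMin = {} \<and> VMax \<inter> T = {} \<and> VMin \<inter> T = {} \<and>
     E \<subseteq> (VMax \<union> VMin) \<times> (VMax \<union> VMin \<union> T) \<and>
     (\<forall>u \<in> VMax \<union> VMin. \<exists>x. (u, x) \<in> E)"

definition path_weight :: "('v \<times> 'v \<Rightarrow> int) \<Rightarrow> 'v list \<Rightarrow> int" where
  "path_weight w xs = sum_list (map w (zip xs (tl xs)))"

text \<open>Closed walks (cycles): a nonempty list, where the last vertex is followed by the first.\<close>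
definition cyc_next :: "'v list \<Rightarrow> nat \<Rightarrow> 'v" where
  "cyc_next cs i = cs ! ((Suc i) mod length cs)"

definition cycle_weight :: "('v \<times> 'v \<Rightarrow> int) \<Rightarrow> 'v list \<Rightarrow> int" where
  "cycle_weight w cs = (\<Sum>i<length cs. w (cs ! i, cyc_next cs i))"

definition is_cycle :: "('v \<Rightarrow> 'v \<Rightarrow> bool) \<Rightarrow> 'v list \<Rightarrow> bool" where
  "is_cycle R cs \<longleftrightarrow> cs \<noteq> [] \<and> (\<forall>i<length cs. R (cs ! i) (cyc_next cs i))"

definition det_strategy :: "'v set \<Rightarrow> ('v \<times> 'v) set \<Rightarrow> ('v list \<Rightarrow> 'v) \<Rightarrow> bool" where
  "det_strategy VP E \<sigma> \<longleftrightarrow> (\<forall>h. h \<noteq> [] \<and> last h \<in> VP \<longrightarrow> (last h, \<sigma> h) \<in> E)"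

definition md_strategy :: "'v set \<Rightarrow> ('v \<times> 'v) set \<Rightarrow> ('v \<Rightarrow> 'v) \<Rightarrow> bool" where
  "md_strategy VP E \<sigma> \<longleftrightarrow> (\<forall>u \<in> VP. (u, \<sigma> u) \<in> E)"

definition m_strategy :: "'v set \<Rightarrow> ('v \<times> 'v) set \<Rightarrow> ('v \<Rightarrow> 'v pmf) \<Rightarrow> bool" where
  "m_strategy VP E \<rho> \<longleftrightarrow> (\<forall>u \<in> VP. set_pmf (\<rho> u) \<subseteq> {x. (u, x) \<in> E})"

primrec hist :: "'v set \<Rightarrow> 'v set \<Rightarrow> ('v list \<Rightarrow> 'v) \<Rightarrow> ('v list \<Rightarrow> 'v) \<Rightarrow> 'v \<Rightarrow> nat \<Rightarrow> 'v list" where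
  "hist VMin T \<sigma> \<tau> v 0 = [v]"
| "hist VMin T \<sigma> \<tau> v (Suc n) =
     (let h = hist VMin T \<sigma> \<tau> v n in
      if last h \<in> T then h else h @ [if last h \<in> VMin then \<sigma> h else \<tau> h])"

definition TP_det :: "'v set \<Rightarrow> 'v set \<Rightarrow> ('v \<times> 'v \<Rightarrow> int) \<Rightarrow> ('v list \<Rightarrow> 'v) \<Rightarrow> ('v list \<Rightarrow> 'v) \<Rightarrow> 'v \<Rightarrow> ereal" where
  "TP_det VMin T w \<sigma> \<tau> v =
     (if \<exists>n. last (hist VMin T \<sigma> \<tau> v n) \<in> T
      then ereal (real_of_int (path_weight w
             (hist VMin T \<sigma> \<tau> v (LEAST n. last (hist VMin T \<sigma> \<tau> v n) \<in> T))))
      else \<infinity>)"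

definition Val_sigma :: "'v set \<Rightarrow> 'v set \<Rightarrow> 'v set \<Rightarrow> ('v \<times> 'v) set \<Rightarrow> ('v \<times> 'v \<Rightarrow> int)
    \<Rightarrow> ('v list \<Rightarrow> 'v) \<Rightarrow> 'v \<Rightarrow> ereal" where
  "Val_sigma VMax VMin T E w \<sigma> v = (SUP \<tau> \<in> {\<tau>. det_strategy VMax E \<tau>}. TP_det VMin T w \<sigma> \<tau> v)"

definition Val_d :: "'v set \<Rightarrow> 'v set \<Rightarrow> 'v set \<Rightarrow> ('v \<times> 'v) set \<Rightarrow> ('v \<times> 'v \<Rightarrow> int) \<Rightarrow> 'v \<Rightarrow> ereal" where
  "Val_d VMax VMin T E w v = (INF \<sigma> \<in> {\<sigma>. det_strategy VMin E \<sigma>}. Val_sigma VMax VMin T E w \<sigma> v)"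

definition kernel :: "'v set \<Rightarrow> ('v \<Rightarrow> 'v pmf) \<Rightarrow> ('v \<Rightarrow> 'v pmf) \<Rightarrow> 'v \<Rightarrow> 'v pmf" where
  "kernel VMin \<rho> \<tau> u = (if u \<in> VMin then \<rho> u else \<tau> u)"

definition paths_to_T :: "'v set \<Rightarrow> 'v \<Rightarrow> 'v list set" where
  "paths_to_T T v = {xs. xs \<noteq> [] \<and> hd xs = v \<and> last xs \<in> T \<and> (\<forall>i < length xs - 1. xs ! i \<notin> T)}"

definition path_prob :: "'v set \<Rightarrow> ('v \<Rightarrow> 'v pmf) \<Rightarrow> ('v \<Rightarrow> 'v pmf) \<Rightarrow> 'v list \<Rightarrow> real" where
  "path_prob VMin \<rho> \<tau> xs = (\<Prod>i < length xs - 1. pmf (kernel VMin \<rho> \<tau> (xs ! i)) (xs ! Suc i))"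

definition reach_prob :: "'v set \<Rightarrow> 'v set \<Rightarrow> ('v \<Rightarrow> 'v pmf) \<Rightarrow> ('v \<Rightarrow> 'v pmf) \<Rightarrow> 'v \<Rightarrow> ennreal" where
  "reach_prob VMin T \<rho> \<tau> v = (\<Sum>\<^sub>\<infinity> xs \<in> paths_to_T T v. ennreal (path_prob VMin \<rho> \<tau> xs))"

text \<open>Expected total payoff: +\<infinity> if T is not reached almost surely (then TP = +\<infinity> with
  positive probability); otherwise the (absolutely convergent) sum over the plays reaching T.\<close>
definition exp_TP :: "'v set \<Rightarrow> 'v set \<Rightarrow> ('v \<times> 'v \<Rightarrow> int) \<Rightarrow> ('v \<Rightarrow> 'v pmf) \<Rightarrow> ('v \<Rightarrow> 'v pmf) \<Rightarrow> 'v \<Rightarrow> ereal" where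
  "exp_TP VMin T w \<rho> \<tau> v =
     (if reach_prob VMin T \<rho> \<tau> v = 1
      then ereal (\<Sum>\<^sub>\<infinity> xs \<in> paths_to_T T v. path_prob VMin \<rho> \<tau> xs * real_of_int (path_weight w xs))
      else \<infinity>)"

definition Val_m_bar :: "'v set \<Rightarrow> 'v set \<Rightarrow> 'v set \<Rightarrow> ('v \<times> 'v) set \<Rightarrow> ('v \<times> 'v \<Rightarrow> int) \<Rightarrow> 'v \<Rightarrow> ereal" where
  "Val_m_bar VMax VMin T E w v =
     (INF \<rho> \<in> {\<rho>. m_strategy VMin E \<rho>}. SUP \<tau> \<in> {\<tau>. m_strategy VMax E \<tau>}. exp_TP VMin T w \<rho> \<tau> v)"

definition conforms_cycle :: "'v set \<Rightarrow> ('v \<Rightarrow> 'v) \<Rightarrow> 'v list \<Rightarrow> bool" where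
  "conforms_cycle VMin \<sigma> cs \<longleftrightarrow> (\<forall>i < length cs. cs ! i \<in> VMin \<longrightarrow> cyc_next cs i = \<sigma> (cs ! i))"

definition NC_strategy :: "'v set \<Rightarrow> ('v \<times> 'v) set \<Rightarrow> ('v \<times> 'v \<Rightarrow> int) \<Rightarrow> ('v \<Rightarrow> 'v) \<Rightarrow> bool" where
  "NC_strategy VMin E w \<sigma> \<longleftrightarrow> md_strategy VMin E \<sigma> \<and>
     (\<forall>cs. is_cycle (\<lambda>a b. (a, b) \<in> E) cs \<and> conforms_cycle VMin \<sigma> cs \<longrightarrow> cycle_weight w cs < 0)"

definition finite_conf_play :: "'v set \<Rightarrow> 'v set \<Rightarrow> ('v \<times> 'v) set \<Rightarrow> ('v \<Rightarrow> 'v) \<Rightarrow> 'v \<Rightarrow> 'v list \<Rightarrow> bool" where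
  "finite_conf_play VMin T E \<sigma> v xs \<longleftrightarrow> xs \<in> paths_to_T T v \<and>
     (\<forall>i < length xs - 1. (xs ! i, xs ! Suc i) \<in> E \<and> (xs ! i \<in> VMin \<longrightarrow> xs ! Suc i = \<sigma> (xs ! i)))"

definition fake_optimal :: "'v set \<Rightarrow> 'v set \<Rightarrow> 'v set \<Rightarrow> ('v \<times> 'v) set \<Rightarrow> ('v \<times> 'v \<Rightarrow> int) \<Rightarrow> ('v \<Rightarrow> 'v) \<Rightarrow> bool" where
  "fake_optimal VMax VMin T E w \<sigma> \<longleftrightarrow>
     (\<forall>v \<in> VMax \<union> VMin \<union> T. \<forall>xs. finite_conf_play VMin T E \<sigma> v xs \<longrightarrow>
        ereal (real_of_int (path_weight w xs)) \<le> Val_d VMax VMin T E w v)"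

definition attractor_strategy :: "'v set \<Rightarrow> 'v set \<Rightarrow> 'v set \<Rightarrow> ('v \<times> 'v) set \<Rightarrow> ('v \<Rightarrow> 'v) \<Rightarrow> bool" where
  "attractor_strategy VMax VMin T E \<sigma> \<longleftrightarrow> md_strategy VMin E \<sigma> \<and>
     \<not> (\<exists>f :: nat \<Rightarrow> 'v. f 0 \<in> VMax \<union> VMin \<union> T \<and> (\<forall>n. f n \<notin> T) \<and>
          (\<forall>n. (f n, f (Suc n)) \<in> E) \<and> (\<forall>n. f n \<in> VMin \<longrightarrow> f (Suc n) = \<sigma> (f n)))"

definition scc_has_neg_cycle :: "('v \<times> 'v) set \<Rightarrow> ('v \<times> 'v \<Rightarrow> int) \<Rightarrow> 'v \<Rightarrow> bool" where
  "scc_has_neg_cycle E w v \<longleftrightarrow>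
     (\<exists>cs. is_cycle (\<lambda>a b. (a, b) \<in> E) cs \<and> set cs \<subseteq> {u. (v, u) \<in> E\<^sup>* \<and> (u, v) \<in> E\<^sup>*} \<and>
           cycle_weight w cs < 0)"

definition rho_p :: "'v set \<Rightarrow> ('v \<times> 'v) set \<Rightarrow> ('v \<times> 'v \<Rightarrow> int) \<Rightarrow> ('v \<Rightarrow> 'v) \<Rightarrow> ('v \<Rightarrow> 'v) \<Rightarrow> real
    \<Rightarrow> 'v \<Rightarrow> 'v pmf" where
  "rho_p VMin E w \<sigma>1 \<sigma>2 p v =
     (if v \<in> VMin then
        (if \<not> scc_has_neg_cycle E w v then return_pmf (\<sigma>1 v)
         else if \<sigma>1 v \<noteq> \<sigma>2 v then map_pmf (\<lambda>b. if b then \<sigma>1 v else \<sigma>2 v) (bernoulli_pmf p)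
         else return_pmf (\<sigma>1 v))
      else return_pmf v)"

definition chain_step :: "'v set \<Rightarrow> 'v set \<Rightarrow> ('v \<Rightarrow> 'v pmf) \<Rightarrow> ('v \<Rightarrow> 'v pmf) \<Rightarrow> 'v \<Rightarrow> 'v \<Rightarrow> bool" where
  "chain_step VMax VMin \<rho> \<tau> u x \<longleftrightarrow> u \<in> VMax \<union> VMin \<and> pmf (kernel VMin \<rho> \<tau> u) x > 0"

end

theory Submission
  imports Defs
begin

text \<open>Every positive-probability transition of the chain either follows \<open>\<sigma>1\<close> or \<open>\<tau>\<close> along an
  edge of the game, or is a \<open>\<sigma>2\<close>-move of probability \<open>1 - p\<close>. Hence a chain cycle avoiding the
  latter is a cycle of the game conforming to \<open>\<sigma>1\<close>, and is negative because \<open>\<sigma>1\<close> is an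
  NC-strategy. The value, fake-optimality, attractor and \<open>0 < p < 1\<close> hypotheses of the
  theorem are not needed for this.\<close>

lemma chain_step_rho_p_cases:
  assumes step: "chain_step VMax VMin (rho_p VMin E w \<sigma>1 \<sigma>2 p) (\<lambda>u. return_pmf (\<tau> u)) u x"
    and \<sigma>1: "md_strategy VMin E \<sigma>1"
    and \<tau>: "md_strategy VMax E \<tau>"
  shows "(u \<in> VMin \<and> scc_has_neg_cycle E w u \<and> \<sigma>1 u \<noteq> \<sigma>2 u \<and> x = \<sigma>2 u)
         \<or> ((u, x) \<in> E \<and> (u \<in> VMin \<longrightarrow> x = \<sigma>1 u))"
proof -
  from step have u: "u \<in> VMax \<union> VMin"
    and x: "x \<in> set_pmf (kernel VMin (rho_p VMin E w \<sigma>1 \<sigma>2 p) (\<lambda>u. return_pmf (\<tau> u)) u)"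
    unfolding chain_step_def by (auto simp: set_pmf_iff)
  show ?thesis
  proof (cases "u \<in> VMin")
    case True
    with \<sigma>1 have "(u, \<sigma>1 u) \<in> E" by (auto simp: md_strategy_def)
    moreover from x True have "x \<in> set_pmf (rho_p VMin E w \<sigma>1 \<sigma>2 p u)"
      by (simp add: kernel_def)
    ultimately show ?thesis using True unfolding rho_p_def by (auto split: if_splits)
  next
    case False
    with u \<tau> have "(u, \<tau> u) \<in> E" by (auto simp: md_strategy_def)
    with x False show ?thesis by (simp add: kernel_def)
  qed
qed

lemma chain_cycle_conforms_if_no_\<sigma>2_move:
  assumes cyc: "is_cycle (chain_step VMax VMin (rho_p VMin E w \<sigma>1 \<sigma>2 p) (\<lambda>u. return_pmf (\<tau> u))) cs"
    and no_\<sigma>2_move: "\<not> (\<exists>i < length cs. cs ! i \<in> VMin \<and> scc_has_neg_cycle E w (cs ! i)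
              \<and> \<sigma>1 (cs ! i) \<noteq> \<sigma>2 (cs ! i) \<and> cyc_next cs i = \<sigma>2 (cs ! i))"
    and \<sigma>1: "md_strategy VMin E \<sigma>1"
    and \<tau>: "md_strategy VMax E \<tau>"
  shows "is_cycle (\<lambda>a b. (a, b) \<in> E) cs" and "conforms_cycle VMin \<sigma>1 cs"
proof -
  have "(cs ! i, cyc_next cs i) \<in> E \<and> (cs ! i \<in> VMin \<longrightarrow> cyc_next cs i = \<sigma>1 (cs ! i))"
    if i: "i < length cs" for i
  proof -
    from cyc i have "chain_step VMax VMin (rho_p VMin E w \<sigma>1 \<sigma>2 p) (\<lambda>u. return_pmf (\<tau> u))
        (cs ! i) (cyc_next cs i)"
      by (simp add: is_cycle_def)
    from chain_step_rho_p_cases[OF this \<sigma>1 \<tau>] no_\<sigma>2_move i show ?thesis by blast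
  qed
  with cyc show "is_cycle (\<lambda>a b. (a, b) \<in> E) cs" "conforms_cycle VMin \<sigma>1 cs"
    by (auto simp: is_cycle_def conforms_cycle_def)
qed

theorem lemma14:
  fixes VMax VMin T :: "'v set" and E :: "('v \<times> 'v) set" and w :: "'v \<times> 'v \<Rightarrow> int"
    and \<sigma>1 \<sigma>2 \<tau> :: "'v \<Rightarrow> 'v" and p :: real
  assumes game: "spgame VMax VMin T E"
    and vald: "\<forall>v \<in> VMax \<union> VMin \<union> T. Val_d VMax VMin T E w v \<noteq> \<infinity>"
    and valm: "\<forall>v \<in> VMax \<union> VMin \<union> T. Val_m_bar VMax VMin T E w v \<noteq> \<infinity>"
    and nc: "NC_strategy VMin E w \<sigma>1"
    and fo: "fake_optimal VMax VMin T E w \<sigma>1"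
    and attr: "attractor_strategy VMax VMin T E \<sigma>2"
    and p: "0 < p" "p < 1"
    and tau: "md_strategy VMax E \<tau>"
  shows "\<forall>cs. is_cycle (chain_step VMax VMin (rho_p VMin E w \<sigma>1 \<sigma>2 p) (\<lambda>u. return_pmf (\<tau> u))) cs
             \<and> cycle_weight w cs \<ge> 0 \<longrightarrow>
           (\<exists>i < length cs. cs ! i \<in> VMin \<and> scc_has_neg_cycle E w (cs ! i)
              \<and> \<sigma>1 (cs ! i) \<noteq> \<sigma>2 (cs ! i) \<and> cyc_next cs i = \<sigma>2 (cs ! i))"
proof (intro allI impI; rule ccontr)
  fix cs
  assume cyc: "is_cycle (chain_step VMax VMin (rho_p VMin E w \<sigma>1 \<sigma>2 p) (\<lambda>u. return_pmf (\<tau> u))) cs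
      \<and> cycle_weight w cs \<ge> 0"
    and no_\<sigma>2_move: "\<not> (\<exists>i < length cs. cs ! i \<in> VMin \<and> scc_has_neg_cycle E w (cs ! i)
      \<and> \<sigma>1 (cs ! i) \<noteq> \<sigma>2 (cs ! i) \<and> cyc_next cs i = \<sigma>2 (cs ! i))"
  have \<sigma>1: "md_strategy VMin E \<sigma>1" using nc by (simp add: NC_strategy_def)
  from cyc have "is_cycle (\<lambda>a b. (a, b) \<in> E) cs" "conforms_cycle VMin \<sigma>1 cs"
    using chain_cycle_conforms_if_no_\<sigma>2_move[OF _ no_\<sigma>2_move \<sigma>1 tau] by auto
  with nc have "cycle_weight w cs < 0" by (simp add: NC_strategy_def)
  with cyc show False by simp
qed

end
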